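(* Let $P$ be a finite poset, $r,s$ positive integers, and $\theta$ a cyclic permutation of $\mathbf{F}_0\cup\mathbf{F}_1$. For every $p\in P$, the statistic $T_p^+-\frac{r}{s}T_p^-$, viewed as a statistic on $\mathcal{J}_{r,s}(P)$, is $0$-mesic under the $q$-rowmotion operator $\rho\colon\mathcal{J}_{r,s}(P)\to\mathcal{J}_{r,s}(P)$.
   Context: $\mathbf{F}_0$ and $\mathbf{F}_1$ are disjoint sets with $\#\mathbf{F}_0=s$, $\#\mathbf{F}_1=r$, and $\theta$ is a permutation of $\mathbf{F}_0\cup\mathbf{F}_1$ consisting of a single cycle of length $r+s$. $\mathcal{J}_{r,s}(P)$ is the set of labelings $L\colon P\to\mathbf{F}_0\cup\mathbf{F}_1$ such that $L^{-1}(\mathbf{F}_0)$ is an order ideal of $P$. An element $x$ is active in $L$ if $x$ is maximal in $L^{-1}(\mathbf{F}_0)$ or minimal in $L^{-1}(\mathbf{F}_1)$. The toggle $\tau_p$ on $\mathcal{J}_{r,s}(P)$ replaces the label $L(p)$ by $\theta(L(p))$ if $p$ is active in $L$, and does nothing otherwise; all other labels are unchanged. $q$-rowmotion is $\rho=\tau_{p_1}\circ\cdots\circ\tau_{p_n}$ for any linear extension $p_1,\dots,p_n$ of $P$. For an order ideal $I$ of $P$: $T_p^+(I)=1$ if $p$ is minimal in $P\setminus I$, else $0$; $T_p^-(I)=1$ if $p$ is maximal in $I$, else $0$; a statistic $g$ on order ideals is viewed on $\mathcal{J}_{r,s}(P)$ via $g(L)\coloneqq g(L^{-1}(\mathbf{F}_0))$.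 A statistic is $c$-mesic under an invertible map of a finite set if its average over every orbit equals $c$. *)

theory Defs
  imports Complex_Main "HOL-Library.FuncSet" "HOL-Combinatorics.Permutations"
begin

definition poset_on :: "'a set \<Rightarrow> ('a \<Rightarrow> 'a \<Rightarrow> bool) \<Rightarrow> bool" where
  "poset_on P le \<longleftrightarrow>
     (\<forall>x\<in>P. le x x) \<and>
     (\<forall>x\<in>P. \<forall>y\<in>P. le x y \<and> le y x \<longrightarrow> x = y) \<and>
     (\<forall>x\<in>P. \<forall>y\<in>P. \<forall>z\<in>P. le x y \<and> le y z \<longrightarrow> le x z)"

definition order_ideal :: "'a set \<Rightarrow> ('a \<Rightarrow> 'a \<Rightarrow> bool) \<Rightarrow> 'a set \<Rightarrow> bool" where
  "order_ideal P le I \<longleftrightarrow> I \<subseteq> P \<and> (\<forall>x\<in>I. \<forall>y\<in>P. le y x \<longrightarrow> y \<in> I)"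

definition is_maximal_in :: "('a \<Rightarrow> 'a \<Rightarrow> bool) \<Rightarrow> 'a set \<Rightarrow> 'a \<Rightarrow> bool" where
  "is_maximal_in le S x \<longleftrightarrow> x \<in> S \<and> (\<forall>y\<in>S. le x y \<longrightarrow> y = x)"

definition is_minimal_in :: "('a \<Rightarrow> 'a \<Rightarrow> bool) \<Rightarrow> 'a set \<Rightarrow> 'a \<Rightarrow> bool" where
  "is_minimal_in le S x \<longleftrightarrow> x \<in> S \<and> (\<forall>y\<in>S. le y x \<longrightarrow> y = x)"

definition single_cycle_perm :: "('b \<Rightarrow> 'b) \<Rightarrow> 'b set \<Rightarrow> bool" where
  "single_cycle_perm \<theta> F \<longleftrightarrow> \<theta> permutes F \<and> (\<exists>x\<in>F. F = {(\<theta> ^^ n) x | n. True})"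

definition lower_part :: "'a set \<Rightarrow> 'b set \<Rightarrow> ('a \<Rightarrow> 'b) \<Rightarrow> 'a set" where
  "lower_part P F0 L = {x\<in>P. L x \<in> F0}"

definition Jrs :: "'a set \<Rightarrow> ('a \<Rightarrow> 'a \<Rightarrow> bool) \<Rightarrow> 'b set \<Rightarrow> 'b set \<Rightarrow> ('a \<Rightarrow> 'b) set" where
  "Jrs P le F0 F1 = {L \<in> P \<rightarrow>\<^sub>E (F0 \<union> F1). order_ideal P le (lower_part P F0 L)}"

definition active :: "'a set \<Rightarrow> ('a \<Rightarrow> 'a \<Rightarrow> bool) \<Rightarrow> 'b set \<Rightarrow> 'b set \<Rightarrow> ('a \<Rightarrow> 'b) \<Rightarrow> 'a \<Rightarrow> bool" where
  "active P le F0 F1 L x \<longleftrightarrow>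
     is_maximal_in le {y\<in>P. L y \<in> F0} x \<or> is_minimal_in le {y\<in>P. L y \<in> F1} x"

definition toggle :: "'a set \<Rightarrow> ('a \<Rightarrow> 'a \<Rightarrow> bool) \<Rightarrow> 'b set \<Rightarrow> 'b set \<Rightarrow> ('b \<Rightarrow> 'b)
    \<Rightarrow> 'a \<Rightarrow> ('a \<Rightarrow> 'b) \<Rightarrow> ('a \<Rightarrow> 'b)" where
  "toggle P le F0 F1 \<theta> p L = (if active P le F0 F1 L p then L(p := \<theta> (L p)) else L)"

definition linear_extension :: "'a set \<Rightarrow> ('a \<Rightarrow> 'a \<Rightarrow> bool) \<Rightarrow> 'a list \<Rightarrow> bool" where
  "linear_extension P le ps \<longleftrightarrow> distinct ps \<and> set ps = P \<and>
     (\<forall>i<length ps. \<forall>j<length ps. le (ps ! i) (ps ! j) \<longrightarrow> i \<le> j)"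

text \<open>q-rowmotion tau_{p1} o ... o tau_{pn} for ps = [p1,...,pn] (tau_{pn} applied first).\<close>
definition q_rowmotion :: "'a set \<Rightarrow> ('a \<Rightarrow> 'a \<Rightarrow> bool) \<Rightarrow> 'b set \<Rightarrow> 'b set \<Rightarrow> ('b \<Rightarrow> 'b)
    \<Rightarrow> 'a list \<Rightarrow> ('a \<Rightarrow> 'b) \<Rightarrow> ('a \<Rightarrow> 'b)" where
  "q_rowmotion P le F0 F1 \<theta> ps L = foldr (toggle P le F0 F1 \<theta>) ps L"

definition Tplus :: "'a set \<Rightarrow> ('a \<Rightarrow> 'a \<Rightarrow> bool) \<Rightarrow> 'a \<Rightarrow> 'a set \<Rightarrow> real" where
  "Tplus P le p I = (if is_minimal_in le (P - I) p then 1 else 0)"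

definition Tminus :: "'a set \<Rightarrow> ('a \<Rightarrow> 'a \<Rightarrow> bool) \<Rightarrow> 'a \<Rightarrow> 'a set \<Rightarrow> real" where
  "Tminus P le p I = (if is_maximal_in le I p then 1 else 0)"

definition orbit_of :: "('c \<Rightarrow> 'c) \<Rightarrow> 'c \<Rightarrow> 'c set" where
  "orbit_of f x = {(f ^^ n) x | n. True}"

definition mesic :: "'c set \<Rightarrow> ('c \<Rightarrow> 'c) \<Rightarrow> ('c \<Rightarrow> real) \<Rightarrow> real \<Rightarrow> bool" where
  "mesic A f g c \<longleftrightarrow>
     (\<forall>x\<in>A. (\<Sum>y\<in>orbit_of f x. g y) / real (card (orbit_of f x)) = c)"

end

theory Submission
  imports Defs "HOL-Combinatorics.Orbits"
begin

text \<open>Because \<theta> is a single cycle and the weights u a = [a \<in> F1] - (r/s) [\<theta> a \<in> F0]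
  sum to r - (r/s) s = 0 over F0 \<union> F1, they are a coboundary: u a = \<phi> (\<theta> a) - \<phi> a for
  some \<phi>. Let M be the labeling at the moment q-rowmotion \<rho> toggles p. Then Tplus holds
  at L exactly when p is active in M and L p \<in> F1, and Tminus holds at \<rho> L exactly when p
  is active in M and (\<rho> L) p \<in> F0; hence
  Tplus(L) - (r/s) Tminus(\<rho> L) = \<phi> ((\<rho> L) p) - \<phi> (L p).
  Summed over a \<rho>-orbit, Tminus \<circ> \<rho> may be replaced by Tminus and the right-hand side
  telescopes to 0.\<close>

lemma single_cycle_perm_enumeration:
  assumes "single_cycle_perm \<theta> F" and "finite F"
  obtains x0 d where "d > 0" and "bij_betw (\<lambda>k. (\<theta> ^^ k) x0) {..<d} F"
    and "(\<theta> ^^ d) x0 = x0"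
proof -
  obtain x0 where F: "F = {(\<theta> ^^ n) x0 | n. True}"
    using assms(1) unfolding single_cycle_perm_def by blast
  have perm: "permutation \<theta>"
    using assms permutation_permutes unfolding single_cycle_perm_def by blast
  have orb: "orbit \<theta> x0 = F"
    using orbit_altdef_permutation[OF perm] F by simp
  have self: "x0 \<in> orbit \<theta> x0"
    using permutation_self_in_orbit[OF perm] .
  define d where "d = funpow_dist1 \<theta> x0 x0"
  have "bij_betw (\<lambda>k. (\<theta> ^^ k) x0) {..<d} F"
    using inj_on_funpow_dist1[OF self] orbit_conv_funpow_dist1[OF self] orb
    unfolding d_def bij_betw_def by (simp add: lessThan_atLeast0)
  moreover have "(\<theta> ^^ d) x0 = x0"
    using funpow_dist1_prop[OF self] unfolding d_def .
  ultimately show ?thesis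
    using that[of d x0] unfolding d_def by simp
qed

lemma single_cycle_perm_coboundary:
  fixes u :: "'b \<Rightarrow> 'c::ab_group_add"
  assumes "single_cycle_perm \<theta> F" and "finite F" and "(\<Sum>a\<in>F. u a) = 0"
  obtains \<phi> where "\<And>a. a \<in> F \<Longrightarrow> \<phi> (\<theta> a) - \<phi> a = u a"
proof -
  obtain x0 d where "d > 0" and bij: "bij_betw (\<lambda>k. (\<theta> ^^ k) x0) {..<d} F"
    and period: "(\<theta> ^^ d) x0 = x0"
    using single_cycle_perm_enumeration[OF assms(1,2)] .
  define e where "e k = (\<theta> ^^ k) x0" for k
  define idx where "idx = the_inv_into {..<d} e"
  define \<phi> where "\<phi> a = (\<Sum>i<idx a. u (e i))" for a
  have bij_e: "bij_betw e {..<d} F"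
    using bij unfolding e_def .
  have idx_e: "idx (e k) = k" if "k < d" for k
    using bij_e that unfolding idx_def bij_betw_def by (simp add: the_inv_into_f_f)
  have total: "(\<Sum>i<d. u (e i)) = 0"
    using sum.reindex_bij_betw[OF bij_e, of u] assms(3) by simp
  have "\<phi> (\<theta> a) - \<phi> a = u a" if "a \<in> F" for a
  proof -
    obtain k where k: "k < d" "a = e k"
      using bij_e \<open>a \<in> F\<close> by (auto simp: bij_betw_def)
    have \<theta>a: "\<theta> a = e (Suc k)"
      using k(2) unfolding e_def by simp
    show ?thesis
    proof (cases "Suc k < d")
      case True
      then show ?thesis
        using \<theta>a idx_e k unfolding \<phi>_def by simp
    next
      case False
      then have "Suc k = d" using k by simp
      have "\<theta> a = e 0"
        using \<theta>a \<open>Suc k = d\<close> period unfolding e_def by simp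
      then have "\<phi> (\<theta> a) = 0"
        using idx_e[of 0] \<open>d > 0\<close> unfolding \<phi>_def by simp
      moreover have "\<phi> a + u a = 0"
        using total \<open>Suc k = d\<close> idx_e k unfolding \<phi>_def by (metis sum.lessThan_Suc)
      ultimately show ?thesis
        by (simp add: minus_unique)
    qed
  qed
  then show ?thesis using that by blast
qed

lemma extremal_iff_order_ideal_Diff_insert:
  assumes I: "order_ideal P le I" and "p \<in> P"
  shows "is_maximal_in le I p \<or> is_minimal_in le (P - I) p \<longleftrightarrow>
    order_ideal P le (I - {p}) \<and> order_ideal P le (insert p I)"
proof (cases "p \<in> I")
  case True
  then have "insert p I = I" by blast
  then show ?thesis
    using I True unfolding order_ideal_def is_maximal_in_def is_minimal_in_def by blast
next
  case False
  then have "I - {p} = I" by blast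
  then show ?thesis
    using I False \<open>p \<in> P\<close>
    unfolding order_ideal_def is_maximal_in_def is_minimal_in_def by blast
qed

lemma Jrs_label_in:
  assumes "L \<in> Jrs P le F0 F1" and "x \<in> P"
  shows "L x \<in> F0 \<union> F1"
  using assms by (auto simp: Jrs_def)

lemma Diff_lower_part_Jrs:
  assumes "L \<in> Jrs P le F0 F1" and "F0 \<inter> F1 = {}"
  shows "P - lower_part P F0 L = {y \<in> P. L y \<in> F1}"
  using assms Jrs_label_in[OF assms(1)] by (auto simp: lower_part_def)

lemma lower_part_fun_upd:
  assumes "p \<in> P"
  shows "lower_part P F0 (L(p := b)) =
    (if b \<in> F0 then insert p (lower_part P F0 L) else lower_part P F0 L - {p})"
  using assms by (auto simp: lower_part_def)

lemma active_Jrs_iff: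
  assumes L: "L \<in> Jrs P le F0 F1" and "F0 \<inter> F1 = {}" and "p \<in> P"
  shows "active P le F0 F1 L p \<longleftrightarrow>
    order_ideal P le (lower_part P F0 L - {p}) \<and> order_ideal P le (insert p (lower_part P F0 L))"
proof -
  have "active P le F0 F1 L p \<longleftrightarrow>
      is_maximal_in le (lower_part P F0 L) p \<or> is_minimal_in le (P - lower_part P F0 L) p"
    using Diff_lower_part_Jrs[OF assms(1,2)] by (simp add: active_def lower_part_def)
  also have "\<dots> \<longleftrightarrow> order_ideal P le (lower_part P F0 L - {p}) \<and>
      order_ideal P le (insert p (lower_part P F0 L))"
    using L \<open>p \<in> P\<close> by (intro extremal_iff_order_ideal_Diff_insert) (simp add: Jrs_def)
  finally show ?thesis .
qed

lemma toggle_other: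
  assumes "q \<noteq> p"
  shows "toggle P le F0 F1 \<theta> p L q = L q"
  using assms by (simp add: toggle_def)

lemma toggle_in_Jrs:
  assumes L: "L \<in> Jrs P le F0 F1" and "p \<in> P" and \<theta>: "\<theta> permutes (F0 \<union> F1)"
    and "F0 \<inter> F1 = {}"
  shows "toggle P le F0 F1 \<theta> p L \<in> Jrs P le F0 F1"
proof (cases "active P le F0 F1 L p")
  case True
  have "\<theta> (L p) \<in> F0 \<union> F1"
    using Jrs_label_in[OF L \<open>p \<in> P\<close>] permutes_in_image[OF \<theta>] by blast
  moreover have "L \<in> P \<rightarrow>\<^sub>E (F0 \<union> F1)"
    using L by (simp add: Jrs_def)
  ultimately have "L(p := \<theta> (L p)) \<in> insert p P \<rightarrow>\<^sub>E (F0 \<union> F1)"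
    by (rule PiE_fun_upd)
  then have "L(p := \<theta> (L p)) \<in> P \<rightarrow>\<^sub>E (F0 \<union> F1)"
    using \<open>p \<in> P\<close> by (simp add: insert_absorb)
  moreover have "order_ideal P le (lower_part P F0 (L(p := \<theta> (L p))))"
    using True active_Jrs_iff[OF assms(1,4,2)] lower_part_fun_upd[OF \<open>p \<in> P\<close>, of F0 L]
    by simp
  ultimately show ?thesis
    using True by (simp add: toggle_def Jrs_def)
qed (use L in \<open>simp add: toggle_def\<close>)

text \<open>Toggling replaces the order ideal I by I - {p} or insert p I, and neither changes
  the pair (I - {p}, insert p I) that decides activity of p.\<close>
lemma active_toggle_iff:
  assumes L: "L \<in> Jrs P le F0 F1" and "p \<in> P" and \<theta>: "\<theta> permutes (F0 \<union> F1)"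
    and "F0 \<inter> F1 = {}"
  shows "active P le F0 F1 (toggle P le F0 F1 \<theta> p L) p \<longleftrightarrow> active P le F0 F1 L p"
proof (cases "active P le F0 F1 L p")
  case True
  let ?I = "lower_part P F0 L" and ?I' = "lower_part P F0 (toggle P le F0 F1 \<theta> p L)"
  have "?I' = (if \<theta> (L p) \<in> F0 then insert p ?I else ?I - {p})"
    using True lower_part_fun_upd[OF \<open>p \<in> P\<close>, of F0 L] by (simp add: toggle_def)
  then have "?I' - {p} = ?I - {p}" and "insert p ?I' = insert p ?I"
    by auto
  then show ?thesis
    using active_Jrs_iff[OF L \<open>F0 \<inter> F1 = {}\<close> \<open>p \<in> P\<close>]
      active_Jrs_iff[OF toggle_in_Jrs[OF assms] \<open>F0 \<inter> F1 = {}\<close> \<open>p \<in> P\<close>]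
    by simp
qed (simp add: toggle_def)

lemma inj_on_toggle:
  assumes "p \<in> P" and \<theta>: "\<theta> permutes (F0 \<union> F1)" and "F0 \<inter> F1 = {}"
  shows "inj_on (toggle P le F0 F1 \<theta> p) (Jrs P le F0 F1)"
proof (rule inj_onI)
  fix L M
  assume L: "L \<in> Jrs P le F0 F1" and M: "M \<in> Jrs P le F0 F1"
    and eq: "toggle P le F0 F1 \<theta> p L = toggle P le F0 F1 \<theta> p M"
  have "active P le F0 F1 L p \<longleftrightarrow> active P le F0 F1 M p"
    using active_toggle_iff[OF L assms] active_toggle_iff[OF M assms] eq by simp
  then consider "active P le F0 F1 L p" "active P le F0 F1 M p"
    | "\<not> active P le F0 F1 L p" "\<not> active P le F0 F1 M p" by blast
  then show "L = M"
  proof cases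
    case 1
    then have upd: "L(p := \<theta> (L p)) = M(p := \<theta> (M p))"
      using eq by (simp add: toggle_def)
    then have "\<theta> (L p) = \<theta> (M p)"
      by (metis fun_upd_same)
    then have "L p = M p"
      using permutes_inj[OF \<theta>] by (simp add: inj_eq)
    then show "L = M"
      using upd by (metis fun_upd_triv fun_upd_upd)
  next
    case 2
    then show "L = M"
      using eq by (simp add: toggle_def)
  qed
qed

lemma foldr_toggle_notin:
  assumes "q \<notin> set xs"
  shows "foldr (toggle P le F0 F1 \<theta>) xs L q = L q"
  using assms by (induction xs) (auto simp: toggle_other)

lemma foldr_toggle_in_Jrs:
  assumes "L \<in> Jrs P le F0 F1" and "set xs \<subseteq> P" and "\<theta> permutes (F0 \<union> F1)"
    and "F0 \<inter> F1 = {}"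
  shows "foldr (toggle P le F0 F1 \<theta>) xs L \<in> Jrs P le F0 F1"
  using assms by (induction xs) (auto intro: toggle_in_Jrs)

lemma inj_on_foldr_toggle:
  assumes "set xs \<subseteq> P" and "\<theta> permutes (F0 \<union> F1)" and "F0 \<inter> F1 = {}"
  shows "inj_on (foldr (toggle P le F0 F1 \<theta>) xs) (Jrs P le F0 F1)"
  using assms
proof (induction xs)
  case (Cons x xs)
  have "foldr (toggle P le F0 F1 \<theta>) xs ` Jrs P le F0 F1 \<subseteq> Jrs P le F0 F1"
    using Cons.prems foldr_toggle_in_Jrs by auto
  moreover have "inj_on (toggle P le F0 F1 \<theta> x) (Jrs P le F0 F1)"
    using Cons.prems by (intro inj_on_toggle) auto
  ultimately have
    "inj_on (toggle P le F0 F1 \<theta> x \<circ> foldr (toggle P le F0 F1 \<theta>) xs) (Jrs P le F0 F1)"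
    using Cons by (intro comp_inj_on) (auto intro: inj_on_subset)
  then show ?case
    by (simp add: comp_def)
qed simp

lemma q_rowmotion_in_Jrs:
  assumes "L \<in> Jrs P le F0 F1" and "linear_extension P le ps"
    and "\<theta> permutes (F0 \<union> F1)" and "F0 \<inter> F1 = {}"
  shows "q_rowmotion P le F0 F1 \<theta> ps L \<in> Jrs P le F0 F1"
  using assms foldr_toggle_in_Jrs
  unfolding q_rowmotion_def linear_extension_def by blast

lemma inj_on_q_rowmotion:
  assumes "linear_extension P le ps" and "\<theta> permutes (F0 \<union> F1)" and "F0 \<inter> F1 = {}"
  shows "inj_on (q_rowmotion P le F0 F1 \<theta> ps) (Jrs P le F0 F1)"
  using assms inj_on_foldr_toggle[of ps P \<theta> F0 F1 le]
  unfolding q_rowmotion_def linear_extension_def by auto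

lemma linear_extension_split:
  assumes lin: "linear_extension P le ps" and "p \<in> P"
  obtains xs ys where "ps = xs @ p # ys" and "p \<notin> set xs" and "p \<notin> set ys"
    and "\<And>q. q \<in> set xs \<Longrightarrow> \<not> le p q" and "\<And>q. q \<in> set ys \<Longrightarrow> \<not> le q p"
proof -
  have "distinct ps" and "p \<in> set ps"
    and order: "\<And>i j. i < length ps \<Longrightarrow> j < length ps \<Longrightarrow>
      le (ps ! i) (ps ! j) \<Longrightarrow> i \<le> j"
    using lin \<open>p \<in> P\<close> by (auto simp: linear_extension_def)
  then obtain xs ys where ps: "ps = xs @ p # ys"
    by (meson split_list)
  have p_at: "ps ! length xs = p" and len: "length ps = length xs + Suc (length ys)"
    using ps by auto
  have "\<not> le p q" if "q \<in> set xs" for q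
  proof -
    obtain k where "k < length xs" and "ps ! k = q"
      using \<open>q \<in> set xs\<close> ps by (auto simp: in_set_conv_nth nth_append)
    then show ?thesis
      using order[of "length xs" k] p_at len by auto
  qed
  moreover have "\<not> le q p" if "q \<in> set ys" for q
  proof -
    obtain k where "k < length ys" and "ps ! (length xs + Suc k) = q"
      using \<open>q \<in> set ys\<close> ps by (auto simp: in_set_conv_nth nth_append)
    then show ?thesis
      using order[of "length xs + Suc k" "length xs"] p_at len by auto
  qed
  moreover have "p \<notin> set xs" and "p \<notin> set ys"
    using \<open>distinct ps\<close> ps by auto
  ultimately show ?thesis
    using that ps by blast
qed

text \<open>M is the labeling at the moment p is toggled: no toggle applied before it concerns an
  element below p, no toggle applied after it an element above p.\<close>
lemma q_rowmotion_split_at: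
  assumes L: "L \<in> Jrs P le F0 F1" and lin: "linear_extension P le ps" and "p \<in> P"
    and \<theta>: "\<theta> permutes (F0 \<union> F1)" and "F0 \<inter> F1 = {}"
  obtains M where "M \<in> Jrs P le F0 F1" and "M p = L p" and "\<And>q. le q p \<Longrightarrow> M q = L q"
    and "\<And>q. le p q \<Longrightarrow> q \<noteq> p \<Longrightarrow> q_rowmotion P le F0 F1 \<theta> ps L q = M q"
    and "q_rowmotion P le F0 F1 \<theta> ps L p = toggle P le F0 F1 \<theta> p M p"
proof -
  obtain xs ys where ps: "ps = xs @ p # ys" and "p \<notin> set xs" and "p \<notin> set ys"
    and xs: "\<And>q. q \<in> set xs \<Longrightarrow> \<not> le p q" and ys: "\<And>q. q \<in> set ys \<Longrightarrow> \<not> le q p"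
    using linear_extension_split[OF lin \<open>p \<in> P\<close>] by blast
  define M where "M = foldr (toggle P le F0 F1 \<theta>) ys L"
  have \<rho>: "q_rowmotion P le F0 F1 \<theta> ps L =
      foldr (toggle P le F0 F1 \<theta>) xs (toggle P le F0 F1 \<theta> p M)"
    unfolding q_rowmotion_def ps M_def by simp
  have "set ys \<subseteq> P"
    using lin ps by (auto simp: linear_extension_def)
  then have "M \<in> Jrs P le F0 F1"
    unfolding M_def using foldr_toggle_in_Jrs[OF L _ \<theta> \<open>F0 \<inter> F1 = {}\<close>] by blast
  moreover have "M p = L p"
    unfolding M_def using foldr_toggle_notin[OF \<open>p \<notin> set ys\<close>] .
  moreover have "M q = L q" if "le q p" for q
    unfolding M_def using foldr_toggle_notin ys that by metis
  moreover have "q_rowmotion P le F0 F1 \<theta> ps L q = M q" if "le p q" and "q \<noteq> p" for q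
    unfolding \<rho> using foldr_toggle_notin xs that toggle_other by metis
  moreover have "q_rowmotion P le F0 F1 \<theta> ps L p = toggle P le F0 F1 \<theta> p M p"
    unfolding \<rho> using foldr_toggle_notin[OF \<open>p \<notin> set xs\<close>] .
  ultimately show ?thesis
    using that by blast
qed

lemma Tplus_eq_if_active:
  assumes L: "L \<in> Jrs P le F0 F1" and "F0 \<inter> F1 = {}" and "p \<in> P"
    and "M p = L p" and "\<And>q. le q p \<Longrightarrow> M q = L q"
  shows "Tplus P le p (lower_part P F0 L) =
    (if active P le F0 F1 M p \<and> L p \<in> F1 then 1 else 0)"
proof -
  have "is_minimal_in le {y \<in> P. M y \<in> F1} p \<longleftrightarrow> is_minimal_in le {y \<in> P. L y \<in> F1} p"
    using assms(4,5) by (auto simp: is_minimal_in_def)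
  then have "active P le F0 F1 M p \<and> L p \<in> F1 \<longleftrightarrow> is_minimal_in le {y \<in> P. L y \<in> F1} p"
    using assms(2,4) by (auto simp: active_def is_maximal_in_def is_minimal_in_def)
  then show ?thesis
    by (simp add: Tplus_def Diff_lower_part_Jrs[OF L \<open>F0 \<inter> F1 = {}\<close>])
qed

lemma Tminus_eq_if_active:
  assumes M: "M \<in> Jrs P le F0 F1" and "F0 \<inter> F1 = {}" and "p \<in> P"
    and above: "\<And>q. le p q \<Longrightarrow> q \<noteq> p \<Longrightarrow> R q = M q"
    and at_p: "R p = toggle P le F0 F1 \<theta> p M p"
  shows "Tminus P le p (lower_part P F0 R) =
    (if active P le F0 F1 M p \<and> R p \<in> F0 then 1 else 0)"
proof -
  let ?none_above = "\<forall>q\<in>P. le p q \<longrightarrow> q \<noteq> p \<longrightarrow> M q \<notin> F0"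
  have Tminus:
    "Tminus P le p (lower_part P F0 R) = (if R p \<in> F0 \<and> ?none_above then 1 else 0)"
    using \<open>p \<in> P\<close> above by (auto simp: Tminus_def is_maximal_in_def lower_part_def)
  have "active P le F0 F1 M p \<longleftrightarrow> ?none_above" if "R p \<in> F0"
  proof (cases "M p \<in> F0")
    case True
    then show ?thesis
      using \<open>p \<in> P\<close> \<open>F0 \<inter> F1 = {}\<close>
      by (auto simp: active_def is_maximal_in_def is_minimal_in_def)
  next
    case False
    then have "active P le F0 F1 M p"
      using at_p \<open>R p \<in> F0\<close> by (auto simp: toggle_def split: if_splits)
    moreover have ?none_above
      using M False \<open>p \<in> P\<close> by (auto simp: Jrs_def order_ideal_def lower_part_def)
    ultimately show ?thesis by simp
  qed
  then show ?thesis
    unfolding Tminus by auto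
qed

lemma q_rowmotion_step_identity:
  fixes \<phi> :: "'b \<Rightarrow> real" and c :: real
  assumes L: "L \<in> Jrs P le F0 F1" and lin: "linear_extension P le ps" and "p \<in> P"
    and \<theta>: "\<theta> permutes (F0 \<union> F1)" and "F0 \<inter> F1 = {}"
    and \<phi>: "\<And>a. a \<in> F0 \<union> F1 \<Longrightarrow>
      \<phi> (\<theta> a) - \<phi> a = (if a \<in> F1 then 1 else 0) - c * (if \<theta> a \<in> F0 then 1 else 0)"
  shows "Tplus P le p (lower_part P F0 L)
      - c * Tminus P le p (lower_part P F0 (q_rowmotion P le F0 F1 \<theta> ps L))
    = \<phi> (q_rowmotion P le F0 F1 \<theta> ps L p) - \<phi> (L p)"
proof -
  let ?R = "q_rowmotion P le F0 F1 \<theta> ps L"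
  obtain M where M: "M \<in> Jrs P le F0 F1" and "M p = L p" and "\<And>q. le q p \<Longrightarrow> M q = L q"
    and "\<And>q. le p q \<Longrightarrow> q \<noteq> p \<Longrightarrow> ?R q = M q"
    and R_p: "?R p = toggle P le F0 F1 \<theta> p M p"
    using q_rowmotion_split_at[OF L lin \<open>p \<in> P\<close> \<theta> \<open>F0 \<inter> F1 = {}\<close>] by blast
  then have Tplus: "Tplus P le p (lower_part P F0 L) =
      (if active P le F0 F1 M p \<and> L p \<in> F1 then 1 else 0)"
    and Tminus: "Tminus P le p (lower_part P F0 ?R) =
      (if active P le F0 F1 M p \<and> ?R p \<in> F0 then 1 else 0)"
    using Tplus_eq_if_active[OF L \<open>F0 \<inter> F1 = {}\<close> \<open>p \<in> P\<close>]
      Tminus_eq_if_active[OF M \<open>F0 \<inter> F1 = {}\<close> \<open>p \<in> P\<close>] by blast+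
  have "?R p = (if active P le F0 F1 M p then \<theta> (L p) else L p)"
    using R_p \<open>M p = L p\<close> by (simp add: toggle_def)
  moreover have "L p \<in> F0 \<union> F1"
    using Jrs_label_in[OF L \<open>p \<in> P\<close>] .
  ultimately show ?thesis
    unfolding Tplus Tminus using \<phi>[of "L p"] by auto
qed

lemma orbit_of_subset:
  assumes "f ` A \<subseteq> A" and "x \<in> A"
  shows "orbit_of f x \<subseteq> A"
proof -
  have "(f ^^ n) x \<in> A" for n
    using assms by (induction n) auto
  then show ?thesis
    by (auto simp: orbit_of_def)
qed

lemma image_orbit_of:
  assumes "finite A" and "f ` A \<subseteq> A" and "inj_on f A" and "x \<in> A"
  shows "f ` orbit_of f x = orbit_of f x"
proof (rule endo_inj_surj)
  show "finite (orbit_of f x)" and "inj_on f (orbit_of f x)"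
    using orbit_of_subset[OF assms(2,4)] assms(1,3)
    by (auto intro: finite_subset inj_on_subset)
  show "f ` orbit_of f x \<subseteq> orbit_of f x"
    unfolding orbit_of_def by (auto intro: exI[of _ "Suc _"])
qed

lemma mesic_zero_if_telescoping:
  fixes a b h :: "'c \<Rightarrow> real"
  assumes "finite A" and "f ` A \<subseteq> A" and "inj_on f A"
    and telescoping: "\<And>x. x \<in> A \<Longrightarrow> a x - b (f x) = h (f x) - h x"
  shows "mesic A f (\<lambda>x. a x - b x) 0"
  unfolding mesic_def
proof
  fix x assume "x \<in> A"
  let ?O = "orbit_of f x"
  have inj: "inj_on f ?O"
    using orbit_of_subset[OF assms(2) \<open>x \<in> A\<close>] assms(3) by (rule inj_on_subset[rotated])
  have shift: "(\<Sum>y\<in>?O. g (f y)) = (\<Sum>y\<in>?O. g y)" for g :: "'c \<Rightarrow> real"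
    using sum.reindex[OF inj, of g] image_orbit_of[OF assms(1-3) \<open>x \<in> A\<close>] by simp
  have "(\<Sum>y\<in>?O. a y - b y) = (\<Sum>y\<in>?O. a y - b (f y))"
    by (simp add: sum_subtractf shift[of b])
  also have "\<dots> = (\<Sum>y\<in>?O. h (f y) - h y)"
    using orbit_of_subset[OF assms(2) \<open>x \<in> A\<close>] telescoping by (intro sum.cong) auto
  also have "\<dots> = 0"
    by (simp add: sum_subtractf shift[of h])
  finally show "(\<Sum>y\<in>?O. a y - b y) / real (card ?O) = 0"
    by simp
qed

lemma finite_Jrs:
  assumes "finite P" and "finite F0" and "finite F1"
  shows "finite (Jrs P le F0 F1)"
proof (rule finite_subset)
  show "Jrs P le F0 F1 \<subseteq> P \<rightarrow>\<^sub>E (F0 \<union> F1)"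
    by (auto simp: Jrs_def)
  show "finite (P \<rightarrow>\<^sub>E (F0 \<union> F1))"
    using assms by (simp add: finite_PiE)
qed

theorem lemma5p4:
  fixes P :: "'a set" and le :: "'a \<Rightarrow> 'a \<Rightarrow> bool"
    and F0 F1 :: "'b set" and \<theta> :: "'b \<Rightarrow> 'b" and r s :: nat
    and ps :: "'a list" and p :: 'a
  assumes "finite P" and "poset_on P le"
    and "finite F0" and "finite F1" and "F0 \<inter> F1 = {}"
    and "card F0 = s" and "card F1 = r" and "r > 0" and "s > 0"
    and "single_cycle_perm \<theta> (F0 \<union> F1)"
    and "linear_extension P le ps"
    and "p \<in> P"
  shows "mesic (Jrs P le F0 F1) (q_rowmotion P le F0 F1 \<theta> ps)
           (\<lambda>L. Tplus P le p (lower_part P F0 L)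
                 - (real r / real s) * Tminus P le p (lower_part P F0 L)) 0"
proof -
  define c where "c = real r / real s"
  define u where "u a = (if a \<in> F1 then 1 else 0) - c * (if \<theta> a \<in> F0 then 1 else 0)" for a
  have \<theta>: "\<theta> permutes (F0 \<union> F1)"
    using assms(10) by (simp add: single_cycle_perm_def)
  have "(\<Sum>a\<in>F0 \<union> F1. if \<theta> a \<in> F0 then 1 else 0 :: real) =
      (\<Sum>a\<in>F0 \<union> F1. if a \<in> F0 then 1 else 0)"
    using sum.permute[OF \<theta>, of "\<lambda>a. if a \<in> F0 then 1 else 0 :: real"] by (simp add: comp_def)
  then have "(\<Sum>a\<in>F0 \<union> F1. u a) = real r - c * real s"
    using assms(3-7)
    by (simp add: u_def sum_subtractf sum_distrib_left[symmetric] sum.If_cases Int_absorb1)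
  also have "\<dots> = 0"
    using \<open>s > 0\<close> by (simp add: c_def)
  finally obtain \<phi> where \<phi>: "\<And>a. a \<in> F0 \<union> F1 \<Longrightarrow> \<phi> (\<theta> a) - \<phi> a = u a"
    using single_cycle_perm_coboundary[OF assms(10)] assms(3,4) by blast
  show ?thesis
    unfolding c_def[symmetric]
  proof (rule mesic_zero_if_telescoping[where h = "\<lambda>L. \<phi> (L p)"])
    show "finite (Jrs P le F0 F1)"
      using assms(1,3,4) by (rule finite_Jrs)
    show "q_rowmotion P le F0 F1 \<theta> ps ` Jrs P le F0 F1 \<subseteq> Jrs P le F0 F1"
      using q_rowmotion_in_Jrs[OF _ assms(11) \<theta> assms(5)] by blast
    show "inj_on (q_rowmotion P le F0 F1 \<theta> ps) (Jrs P le F0 F1)"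
      using assms(11) \<theta> assms(5) by (rule inj_on_q_rowmotion)
  qed (use q_rowmotion_step_identity[OF _ assms(11,12) \<theta> assms(5) \<phi>[unfolded u_def]] in simp)
qed

end
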